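(* Let $\mathbb{B}=\mathbb{C}\otimes\mathbb{H}$ be the algebra of complexified quaternions, whose elements are written $x=(x_1,x_2,x_3,x_4)$ to mean $x=x_1+x_2\hat{i}+x_3\hat{j}+x_4\hat{k}$ with $x_1,\dots,x_4\in\mathbb{C}$. The quaternion units satisfy $\hat{i}^2=\hat{j}^2=\hat{k}^2=\hat{i}\hat{j}\hat{k}=-1$, and multiplication is extended $\mathbb{C}$-bilinearly, with the complex scalars commuting with $\hat{i},\hat{j},\hat{k}$. Call $x\in\mathbb{B}$ entangled if its concurrence $C(x)=2\,|x_1x_4-x_2x_3|$ is nonzero. Let $\alpha,\beta\in\mathbb{C}$ with $\alpha\neq0$, $\beta\neq0$ and $|\alpha|^2+|\beta|^2=1$. Let $q$ be one of $$(\alpha,\beta,0,0),\quad (0,0,\alpha,\beta),\quad (\alpha,0,\beta,0),\quad (0,\alpha,0,\beta).$$ Let $p=(a_1,a_2,a_3,a_4)$ with $a_1,\dots,a_4\in\mathbb{R}$ and $a_1^2+a_2^2+a_3^2+a_4^2=1$, and suppose $p$ satisfies: (R1) $p$ is not entangled, i.e. $a_1a_4=a_2a_3$; (R2) $p$ is not a pure state, i.e. at least two of $a_1,\dots,a_4$ are nonzero; (R3) $p$ is connected to $q$ in exactly one direction, i.e. there is exactly one index $m\in\{1,2,3,4\}$ for which both the $m$-th coordinate of $p$ and the $m$-th coordinate of $q$ are nonzero. Then $\Lambda(q):=pqp$ is entangled, i.e. $C(pqp)\neq0$.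
   Context: In the paper, a one-particle state $\alpha|0\rangle+\beta|1\rangle$ with $|\alpha|^2+|\beta|^2=1$ is embedded in $\mathbb{B}$ in one of the four listed ways. The map $\Lambda(q)=pqp$, with $p$ a real unit quaternion, is proposed as an "entanglement operator". The concurrence of $x=(x_1,x_2,x_3,x_4)$ is $C(x)=2|x_1x_4-x_2x_3|$, and $x$ is called entangled iff $C(x)\neq0$. A "pure state" in $\mathbb{B}$ means an element with only one nonzero coordinate. *)

theory Defs
  imports Complex_Main
begin

text \<open>Complexified quaternions B = C (x) H: x = x1 + x2 i + x3 j + x4 k with complex xi.\<close>
datatype bq = BQ complex complex complex complex

fun coord :: "bq \<Rightarrow> nat \<Rightarrow> complex" where
  "coord (BQ x1 x2 x3 x4) n =
     (if n = 1 then x1 else if n = 2 then x2 else if n = 3 then x3 else if n = 4 then x4 else 0)"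

text \<open>C-bilinear extension of the Hamilton product (i^2 = j^2 = k^2 = ijk = -1).\<close>
fun bq_mult :: "bq \<Rightarrow> bq \<Rightarrow> bq" where
  "bq_mult (BQ a1 b1 c1 d1) (BQ a2 b2 c2 d2) =
     BQ (a1*a2 - b1*b2 - c1*c2 - d1*d2)
        (a1*b2 + b1*a2 + c1*d2 - d1*c2)
        (a1*c2 - b1*d2 + c1*a2 + d1*b2)
        (a1*d2 + b1*c2 - c1*b2 + d1*a2)"

definition concurrence :: "bq \<Rightarrow> real" where
  "concurrence x = 2 * cmod (coord x 1 * coord x 4 - coord x 2 * coord x 3)"

definition entangled :: "bq \<Rightarrow> bool" where
  "entangled x \<longleftrightarrow> concurrence x \<noteq> 0"


end

theory Submission
  imports Defs
begin

text \<open>Entanglement is the nonvanishing of the determinant x1 x4 - x2 x3 of the coordinate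
matrix. For p not entangled this determinant vanishes, which rules out supports of size three
and the supports {1,4}, {2,3}; together with (R2) the support of p is all of {1,..,4} or one of
{1,2}, {3,4}, {1,3}, {2,4}, the possible supports of q. Meeting the support of q exactly once
(R3) then forces p = a + c i or (a + c i) j when q is supported on {1,3} or {2,4}, and
p = a + c j or i (a + c j) when q is supported on {1,2} or {3,4}. For such p an explicit
computation gives the determinant of p q p as (a^4 - c^4) det q plus or minus
2 a c (a^2 + c^2) \<alpha> \<beta>; here det q = 0, and the second term is nonzero because a and c
are real and nonzero.\<close>

definition bq_det :: "bq \<Rightarrow> complex" where
  "bq_det x = coord x 1 * coord x 4 - coord x 2 * coord x 3"

definition bq_support :: "bq \<Rightarrow> nat set" where
  "bq_support x = {m \<in> {1..4}. coord x m \<noteq> 0}"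

lemma entangled_iff_bq_det: "entangled x \<longleftrightarrow> bq_det x \<noteq> 0"
  by (simp add: entangled_def concurrence_def bq_det_def)

lemma bq_support_BQ:
  "bq_support (BQ x1 x2 x3 x4) =
     (if x1 = 0 then {} else {1}) \<union> (if x2 = 0 then {} else {2}) \<union>
     (if x3 = 0 then {} else {3}) \<union> (if x4 = 0 then {} else {4})"
  unfolding bq_support_def by auto

lemma bq_support_of_bq_det_eq_0:
  assumes "bq_det x = 0" and "card (bq_support x) \<ge> 2"
  shows "bq_support x \<in> {{1,2,3,4}, {1,2}, {3,4}, {1,3}, {2,4}}"
  using assms by (cases x) (auto simp: bq_det_def bq_support_BQ split: if_splits)

lemma bq_det_sandwich_12:
  "bq_det (bq_mult (bq_mult (BQ a c 0 0) (BQ x1 x2 x3 x4)) (BQ a c 0 0)) =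
     (a^4 - c^4) * (x1 * x4 - x2 * x3) - 2 * a * c * (a\<^sup>2 + c\<^sup>2) * (x1 * x3 + x2 * x4)"
  unfolding bq_det_def by simp algebra

lemma bq_det_sandwich_34:
  "bq_det (bq_mult (bq_mult (BQ 0 0 a c) (BQ x1 x2 x3 x4)) (BQ 0 0 a c)) =
     (c^4 - a^4) * (x1 * x4 - x2 * x3) + 2 * a * c * (a\<^sup>2 + c\<^sup>2) * (x1 * x3 + x2 * x4)"
  unfolding bq_det_def by simp algebra

lemma bq_det_sandwich_13:
  "bq_det (bq_mult (bq_mult (BQ a 0 c 0) (BQ x1 x2 x3 x4)) (BQ a 0 c 0)) =
     (a^4 - c^4) * (x1 * x4 - x2 * x3) - 2 * a * c * (a\<^sup>2 + c\<^sup>2) * (x1 * x2 + x3 * x4)"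
  unfolding bq_det_def by simp algebra

lemma bq_det_sandwich_24:
  "bq_det (bq_mult (bq_mult (BQ 0 a 0 c) (BQ x1 x2 x3 x4)) (BQ 0 a 0 c)) =
     (c^4 - a^4) * (x1 * x4 - x2 * x3) + 2 * a * c * (a\<^sup>2 + c\<^sup>2) * (x1 * x2 + x3 * x4)"
  unfolding bq_det_def by simp algebra

lemma sum_squares_of_real_neq_0:
  "a \<noteq> 0 \<Longrightarrow> (complex_of_real a)\<^sup>2 + (complex_of_real c)\<^sup>2 \<noteq> 0"
  by (metis of_real_add of_real_eq_0_iff of_real_power sum_power2_eq_zero_iff)

lemma entangled_sandwich_support_12_34:
  fixes a1 a2 a3 a4 :: real
  assumes p: "p = BQ (of_real a1) (of_real a2) (of_real a3) (of_real a4)"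
    and "bq_support p \<in> {{1,2}, {3,4}}"
    and "bq_det q = 0" and "coord q 1 * coord q 3 + coord q 2 * coord q 4 \<noteq> 0"
  shows "entangled (bq_mult (bq_mult p q) p)"
proof -
  obtain x1 x2 x3 x4 where q: "q = BQ x1 x2 x3 x4" by (cases q)
  have q_conds: "x1 * x4 - x2 * x3 = 0" "x1 * x3 + x2 * x4 \<noteq> 0"
    using assms(3,4) by (simp_all add: q bq_det_def)
  from assms(2) consider "p = BQ (of_real a1) (of_real a2) 0 0" "a1 \<noteq> 0" "a2 \<noteq> 0"
    | "p = BQ 0 0 (of_real a3) (of_real a4)" "a3 \<noteq> 0" "a4 \<noteq> 0"
    by (auto simp: p bq_support_BQ set_eq_subset split: if_splits)
  then show ?thesis
  proof cases
    case 1
    then show ?thesis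
      using q_conds sum_squares_of_real_neq_0[of a1 a2]
      unfolding entangled_iff_bq_det 1(1) q bq_det_sandwich_12 by simp
  next
    case 2
    then show ?thesis
      using q_conds sum_squares_of_real_neq_0[of a3 a4]
      unfolding entangled_iff_bq_det 2(1) q bq_det_sandwich_34 by simp
  qed
qed

lemma entangled_sandwich_support_13_24:
  fixes a1 a2 a3 a4 :: real
  assumes p: "p = BQ (of_real a1) (of_real a2) (of_real a3) (of_real a4)"
    and "bq_support p \<in> {{1,3}, {2,4}}"
    and "bq_det q = 0" and "coord q 1 * coord q 2 + coord q 3 * coord q 4 \<noteq> 0"
  shows "entangled (bq_mult (bq_mult p q) p)"
proof -
  obtain x1 x2 x3 x4 where q: "q = BQ x1 x2 x3 x4" by (cases q)
  have q_conds: "x1 * x4 - x2 * x3 = 0" "x1 * x2 + x3 * x4 \<noteq> 0"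
    using assms(3,4) by (simp_all add: q bq_det_def)
  from assms(2) consider "p = BQ (of_real a1) 0 (of_real a3) 0" "a1 \<noteq> 0" "a3 \<noteq> 0"
    | "p = BQ 0 (of_real a2) 0 (of_real a4)" "a2 \<noteq> 0" "a4 \<noteq> 0"
    by (auto simp: p bq_support_BQ set_eq_subset split: if_splits)
  then show ?thesis
  proof cases
    case 1
    then show ?thesis
      using q_conds sum_squares_of_real_neq_0[of a1 a3]
      unfolding entangled_iff_bq_det 1(1) q bq_det_sandwich_13 by simp
  next
    case 2
    then show ?thesis
      using q_conds sum_squares_of_real_neq_0[of a2 a4]
      unfolding entangled_iff_bq_det 2(1) q bq_det_sandwich_24 by simp
  qed
qed

lemma pairs_meeting_once:
  assumes "S \<in> {{1,2,3,4}, {1,2}, {3,4}, {1,3}, {2,4}}" and "T \<in> {{1,2}, {3,4}, {1,3}, {2,4::nat}}"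
    and "is_singleton (S \<inter> T)"
  shows "S \<in> {{1,2}, {3,4}} \<and> T \<in> {{1,3}, {2,4}} \<or> S \<in> {{1,3}, {2,4}} \<and> T \<in> {{1,2}, {3,4}}"
  using assms by (elim insertE emptyE; simp add: is_singleton_altdef Int_insert_left)

theorem mainTheorem1:
  fixes \<alpha> \<beta> :: complex and a1 a2 a3 a4 :: real and q p :: bq
  assumes "\<alpha> \<noteq> 0" and "\<beta> \<noteq> 0" and "(cmod \<alpha>)\<^sup>2 + (cmod \<beta>)\<^sup>2 = 1"
    and "q \<in> {BQ \<alpha> \<beta> 0 0, BQ 0 0 \<alpha> \<beta>, BQ \<alpha> 0 \<beta> 0, BQ 0 \<alpha> 0 \<beta>}"
    and "p = BQ (complex_of_real a1) (complex_of_real a2) (complex_of_real a3) (complex_of_real a4)"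
    and "a1\<^sup>2 + a2\<^sup>2 + a3\<^sup>2 + a4\<^sup>2 = 1"
    and R1: "\<not> entangled p"
    and R2: "card {m \<in> {1..4::nat}. coord p m \<noteq> 0} \<ge> 2"
    and R3: "\<exists>!m. m \<in> {1..4::nat} \<and> coord p m \<noteq> 0 \<and> coord q m \<noteq> 0"
  shows "entangled (bq_mult (bq_mult p q) p)"
proof -
  have p_det: "bq_det p = 0"
    using R1 by (simp add: entangled_iff_bq_det)
  have q_det: "bq_det q = 0"
    using assms(4) by (auto simp: bq_det_def)
  have support_p: "bq_support p \<in> {{1,2,3,4}, {1,2}, {3,4}, {1,3}, {2,4}}"
    using bq_support_of_bq_det_eq_0[OF p_det] R2 by (simp add: bq_support_def)
  have support_q: "bq_support q \<in> {{1,2}, {3,4}, {1,3}, {2,4}}"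
    using assms(1,2,4) by (auto simp: bq_support_BQ)
  have "is_singleton (bq_support p \<inter> bq_support q)"
    using R3 by (simp add: is_singleton_iff_ex1 bq_support_def conj_ac)
  from pairs_meeting_once[OF support_p support_q this] show ?thesis
  proof (elim disjE conjE)
    assume "bq_support p \<in> {{1,2}, {3,4}}" and "bq_support q \<in> {{1,3}, {2,4}}"
    moreover from this(2) have "coord q 1 * coord q 3 + coord q 2 * coord q 4 \<noteq> 0"
      using assms(1,2,4) by (auto simp: bq_support_BQ set_eq_subset)
    ultimately show ?thesis
      using entangled_sandwich_support_12_34[OF assms(5) _ q_det] by blast
  next
    assume "bq_support p \<in> {{1,3}, {2,4}}" and "bq_support q \<in> {{1,2}, {3,4}}"
    moreover from this(2) have "coord q 1 * coord q 2 + coord q 3 * coord q 4 \<noteq> 0"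
      using assms(1,2,4) by (auto simp: bq_support_BQ set_eq_subset)
    ultimately show ?thesis
      using entangled_sandwich_support_13_24[OF assms(5) _ q_det] by blast
  qed
qed

end
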